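(* Let $D\subset\mathbb N^n$ be finite, not contained in any coordinate hyperplane, $p$ a prime. Let $U\in E_{D,p}(r)$ and $U'\in E_{D,p}(r')$ be minimal with $\varphi_U(0)=\varphi_{U'}(0)$, and define $V=(v_{\mathbf d})$ by $v_{\mathbf d}=p^ru'_{\mathbf d}+u_{\mathbf d}$. Then $V$ is a minimal element of $E_{D,p}(r+r')$, and its support satisfies $\varphi_V(i)=\varphi_{U'}(i)$ for $0\le i\le r'$ and $\varphi_V(i+r')=\varphi_U(i)$ for $1\le i\le r-1$.
   Context: $s_p$ = base-$p$ digit sum. $E_{D,p}(r)$ = set of $U=(u_{\mathbf d})\in\{0,\dots,p^r-1\}^D$ with $\sum u_{\mathbf d}\mathbf d\equiv0\pmod{p^r-1}$ and all coordinates of $\sum u_{\mathbf d}\mathbf d$ positive; $s_p(U)=\sum s_p(u_{\mathbf d})$; $\delta_p(D)=\frac1{p-1}\min_{r\ge1}\min_{U\in E_{D,p}(r)}s_p(U)/r$; $U\in E_{D,p}(r)$ is minimal if $s_p(U)=(p-1)r\delta_p(D)$. Shift $\delta_r$: $k\mapsto pk\bmod(p^r-1)$ for $k\le p^r-2$, $p^r-1\mapsto p^r-1$, coordinatewise. For $U\in E_{D,p}(r)$, $\varphi_U:\mathbb Z/r\mathbb Z\to\mathbb N_{>0}^n$, $\varphi_U(k)=\frac1{p^r-1}\sum\mathbf d(\delta_r^kU)_{\mathbf d}$ (indices taken modulo $r$). *)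

theory Defs
  imports Complex_Main "HOL-Computational_Algebra.Primes"
begin

text \<open>Points of \<open>\<nat>\<^sup>n\<close> are functions \<open>'n \<Rightarrow> nat\<close> for a finite index type \<open>'n\<close>.
  A tuple \<open>U = (u_d)_{d \<in> D}\<close> is a function \<open>('n \<Rightarrow> nat) \<Rightarrow> nat\<close> vanishing outside D.\<close>

function digit_sum :: "nat \<Rightarrow> nat \<Rightarrow> nat" where
  "digit_sum p k = (if p \<le> 1 \<or> k = 0 then 0 else k mod p + digit_sum p (k div p))"
  by pat_completeness auto
termination by (relation "measure snd") auto

declare digit_sum.simps[simp del]

definition sp_tuple :: "('n \<Rightarrow> nat) set \<Rightarrow> nat \<Rightarrow> (('n \<Rightarrow> nat) \<Rightarrow> nat) \<Rightarrow> nat" where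
  "sp_tuple D p U = (\<Sum>d\<in>D. digit_sum p (U d))"

definition E_set :: "('n \<Rightarrow> nat) set \<Rightarrow> nat \<Rightarrow> nat \<Rightarrow> (('n \<Rightarrow> nat) \<Rightarrow> nat) set" where
  "E_set D p r = {U. (\<forall>d. d \<notin> D \<longrightarrow> U d = 0) \<and> (\<forall>d\<in>D. U d \<le> p ^ r - 1)
      \<and> (\<forall>i. (\<Sum>d\<in>D. U d * d i) mod (p ^ r - 1) = 0)
      \<and> (\<forall>i. (\<Sum>d\<in>D. U d * d i) > 0)}"

definition delta_p :: "('n \<Rightarrow> nat) set \<Rightarrow> nat \<Rightarrow> real" where
  "delta_p D p = (1 / (real p - 1)) *
     Inf {real (sp_tuple D p U) / real r | r U. r \<ge> 1 \<and> U \<in> E_set D p r}"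

definition minimal :: "('n \<Rightarrow> nat) set \<Rightarrow> nat \<Rightarrow> nat \<Rightarrow> (('n \<Rightarrow> nat) \<Rightarrow> nat) \<Rightarrow> bool" where
  "minimal D p r U \<longleftrightarrow> U \<in> E_set D p r \<and>
     real (sp_tuple D p U) = (real p - 1) * real r * delta_p D p"

definition shift :: "nat \<Rightarrow> nat \<Rightarrow> nat \<Rightarrow> nat" where
  "shift p r k = (if k = p ^ r - 1 then k else (p * k) mod (p ^ r - 1))"

definition phi :: "('n \<Rightarrow> nat) set \<Rightarrow> nat \<Rightarrow> nat \<Rightarrow> (('n \<Rightarrow> nat) \<Rightarrow> nat) \<Rightarrow> nat \<Rightarrow> ('n \<Rightarrow> real)" where
  "phi D p r U k = (\<lambda>i. real (\<Sum>d\<in>D. ((shift p r) ^^ (k mod r)) (U d) * d i) / (real p ^ r - 1))"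

end

theory Submission
  imports Defs
begin

text \<open>Write the entries of \<open>U\<close> and \<open>U'\<close> as words of \<open>r\<close> and \<open>r'\<close> base-\<open>p\<close> digits; then
  \<open>V d\<close> is the concatenated word of \<open>r + r'\<close> digits, so the digit sum of \<open>V\<close> is that of \<open>U\<close> plus
  that of \<open>U'\<close>, and minimality of \<open>V\<close> follows as soon as \<open>V \<in> E_set D p (r + r')\<close>. If \<open>c\<close> is
  the common value of \<open>\<phi>\<^sub>U(0)\<close> and \<open>\<phi>\<^sub>U\<^sub>'(0)\<close>, then \<open>\<Sigma> U d \<cdot> d = (p ^ r - 1) c\<close> and
  \<open>\<Sigma> U' d \<cdot> d = (p ^ r' - 1) c\<close>, hence \<open>\<Sigma> V d \<cdot> d = (p ^ (r + r') - 1) c\<close>.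
  Finally, on \<open>R\<close>-digit words the shift is cyclic rotation, so \<open>\<delta>\<^sub>R\<^sup>i v = p ^ i v - (p ^ R - 1) t\<close>
  where \<open>t\<close> is the number formed by the top \<open>i\<close> digits of \<open>v\<close>. For \<open>i \<le> r'\<close> the top \<open>i\<close> digits
  of \<open>V d\<close> are those of \<open>U' d\<close>; for \<open>i + r'\<close> they are \<open>U' d\<close> followed by the top \<open>i\<close> digits
  of \<open>U d\<close>.\<close>

lemma digit_sum_0 [simp]: "digit_sum p 0 = 0"
  by (simp add: digit_sum.simps)

lemma digit_sum_eq: "p \<ge> 2 \<Longrightarrow> digit_sum p n = n mod p + digit_sum p (n div p)"
  by (cases "n = 0") (simp, subst digit_sum.simps, auto)

lemma digit_sum_concat:
  assumes p: "p \<ge> 2"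
  shows "y < p ^ r \<Longrightarrow> digit_sum p (p ^ r * x + y) = digit_sum p x + digit_sum p y"
proof (induction r arbitrary: y)
  case 0
  then show ?case by simp
next
  case (Suc r)
  have "(p ^ Suc r * x + y) div p = p ^ r * x + y div p"
    using p by (simp add: mult.assoc)
  moreover have "(p ^ Suc r * x + y) mod p = y mod p"
    by (simp add: mod_add_left_eq[symmetric])
  moreover have "y div p < p ^ r"
    using Suc.prems p by (simp add: less_mult_imp_div_less mult.commute)
  ultimately show ?case
    using Suc.IH digit_sum_eq[OF p, of "p ^ Suc r * x + y"] digit_sum_eq[OF p, of y] by simp
qed

text \<open>For \<open>v < p ^ R\<close>, \<open>rotate_digits p R i v\<close> is the word of the \<open>R\<close> base-\<open>p\<close> digits
  of \<open>v\<close> rotated cyclically so that its top \<open>i\<close> digits become the bottom ones.\<close>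

definition rotate_digits :: "nat \<Rightarrow> nat \<Rightarrow> nat \<Rightarrow> nat \<Rightarrow> nat" where
  "rotate_digits p R i v = v mod p ^ (R - i) * p ^ i + v div p ^ (R - i)"

lemma rotate_digits_0: "v < p ^ R \<Longrightarrow> rotate_digits p R 0 v = v"
  by (simp add: rotate_digits_def)

lemma rotate_digits_less:
  assumes p: "p \<ge> 2" and i: "i \<le> R" and v: "v < p ^ R"
  shows "rotate_digits p R i v < p ^ R"
proof -
  have pR: "p ^ R = p ^ (R - i) * p ^ i"
    using i by (simp add: power_add[symmetric])
  have "v div p ^ (R - i) < p ^ i"
    using v p by (simp add: pR div_less_iff_less_mult mult.commute)
  then have "rotate_digits p R i v < (v mod p ^ (R - i) + 1) * p ^ i"
    by (simp add: rotate_digits_def)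
  also have "\<dots> \<le> p ^ (R - i) * p ^ i"
    using p by (intro mult_right_mono) (simp_all add: Suc_le_eq)
  finally show ?thesis
    by (simp add: pR)
qed

lemma rotate_digits_add:
  assumes p: "p > 0" and i: "i \<le> R"
  shows "rotate_digits p R i v + (p ^ R - 1) * (v div p ^ (R - i)) = p ^ i * v"
proof -
  define q where "q = v div p ^ (R - i)"
  define m where "m = v mod p ^ (R - i)"
  have pR: "p ^ R = p ^ (R - i) * p ^ i"
    using i by (simp add: power_add[symmetric])
  have "p ^ i * v = p ^ i * (q * p ^ (R - i) + m)"
    by (simp only: q_def m_def div_mult_mod_eq)
  also have "\<dots> = m * p ^ i + p ^ R * q"
    by (simp add: pR algebra_simps)
  also have "p ^ R * q = (p ^ R - 1) * q + q"
    using p by (simp add: diff_mult_distrib)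
  finally show ?thesis
    by (simp add: rotate_digits_def q_def[symmetric] m_def[symmetric])
qed

text \<open>Multiplication by \<open>p\<close> modulo \<open>p ^ R - 1\<close> moves the top digit to the bottom; the only
  exception is \<open>p ^ R - 1\<close> itself, whose residue \<open>0\<close> the definition of \<open>shift\<close> reads back as
  \<open>p ^ R - 1\<close>.\<close>

lemma shift_eq_rotate_digits_1:
  assumes p: "p \<ge> 2" and R: "R \<ge> 1" and w: "w < p ^ R"
  shows "shift p R w = rotate_digits p R 1 w"
proof -
  define N where "N = p ^ R - 1"
  define X where "X = rotate_digits p R 1 w"
  define a where "a = w div p ^ (R - 1)"
  have N: "N > 0"
    using one_less_power[of p R] p R by (simp add: N_def)
  have wN: "w \<le> N"
    using w by (simp add: N_def)
  have XN: "X \<le> N"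
    using rotate_digits_less[OF p R w] by (simp add: X_def N_def)
  have "p ^ R = p * p ^ (R - 1)"
    using R by (cases R) simp_all
  then have a: "a < p"
    using w p by (simp add: a_def div_less_iff_less_mult)
  have key: "p * w = X + N * a"
    using rotate_digits_add[of p 1 R w] p R by (simp add: X_def N_def a_def)
  have "coprime N (p ^ R)"
    unfolding N_def using p by (intro coprime_diff_one_left_nat) simp
  then have cop: "coprime N p"
    using R by simp
  show ?thesis
  proof (cases "w = N")
    case True
    have "X \<noteq> 0"
    proof
      assume "X = 0"
      then have "N * p = N * a"
        using key True by (simp add: mult.commute)
      then show False
        using N a by simp
    qed
    moreover have "N dvd X"
      using key True by (metis dvd_add_times_triv_right_iff dvd_triv_left mult.commute)
    ultimately have "X = N"
      using XN by (meson dvd_imp_le le_antisym neq0_conv)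
    then show ?thesis
      using True by (simp add: shift_def N_def X_def)
  next
    case False
    have "X \<noteq> N"
    proof
      assume "X = N"
      then have "N dvd p * w"
        using key by simp
      then have "N dvd w"
        using cop by (simp add: coprime_dvd_mult_right_iff)
      then have "w = 0"
        using False wN by (metis dvd_imp_le le_antisym neq0_conv)
      then show False
        using key \<open>X = N\<close> N by simp
    qed
    then have "p * w mod N = X"
      using key XN by simp
    then show ?thesis
      using False by (simp add: shift_def N_def X_def)
  qed
qed

lemma rotate_digits_Suc:
  assumes p: "p \<ge> 2" and i: "i < R" and v: "v < p ^ R"
  shows "rotate_digits p R 1 (rotate_digits p R i v) = rotate_digits p R (Suc i) v"
proof -
  obtain k where k: "R - i = Suc k"
    using i by (metis Suc_diff_Suc)
  then have R1: "R - 1 = k + i" and RSi: "R - Suc i = k"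
    using i by simp_all
  define q where "q = v div p ^ Suc k"
  define a where "a = v div p ^ k mod p"
  define m where "m = v mod p ^ k"
  have "v mod p ^ Suc k = p ^ k * a + m"
    unfolding a_def m_def by (metis mod_mult2_eq power_Suc2)
  then have rot_i: "rotate_digits p R i v = a * p ^ (k + i) + (m * p ^ i + q)"
    by (simp add: rotate_digits_def k q_def algebra_simps power_add)
  have "v div p ^ k = p * q + a"
    unfolding q_def a_def by (metis div_mult2_eq mult.commute div_mult_mod_eq power_Suc)
  then have rot_Si: "rotate_digits p R (Suc i) v = m * p ^ Suc i + (p * q + a)"
    by (simp add: rotate_digits_def RSi m_def)
  have "R = i + Suc k"
    using k i by simp
  then have "p ^ R = p ^ i * p ^ Suc k"
    by (simp only: power_add)
  then have "q < p ^ i"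
    using v p by (simp add: q_def div_less_iff_less_mult)
  moreover have "m < p ^ k"
    using p by (simp add: m_def)
  ultimately have low: "m * p ^ i + q < p ^ (k + i)"
    using mult_right_mono[of "Suc m" "p ^ k" "p ^ i"] by (simp add: power_add)
  have div: "rotate_digits p R i v div p ^ (k + i) = a"
    and mod: "rotate_digits p R i v mod p ^ (k + i) = m * p ^ i + q"
    using low p by (simp_all add: rot_i)
  have "rotate_digits p R 1 (rotate_digits p R i v) = (m * p ^ i + q) * p + a"
    unfolding rotate_digits_def[of p R 1] R1 div mod by simp
  then show ?thesis
    by (simp add: rot_Si algebra_simps)
qed

lemma shift_iterate:
  assumes p: "p \<ge> 2" and v: "v < p ^ R"
  shows "i \<le> R \<Longrightarrow> (shift p R ^^ i) v = rotate_digits p R i v"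
proof (induction i)
  case 0
  then show ?case
    using v by (simp add: rotate_digits_0)
next
  case (Suc i)
  then show ?case
    using shift_eq_rotate_digits_1[OF p _ rotate_digits_less[OF p _ v]] rotate_digits_Suc[OF p _ v]
    by simp
qed

lemma shift_iterate_mod_add:
  assumes p: "p \<ge> 2" and R: "R \<ge> 1" and i: "i \<le> R" and v: "v < p ^ R"
  shows "(shift p R ^^ (i mod R)) v + (p ^ R - 1) * (v div p ^ (R - i)) = p ^ i * v"
proof -
  have "(shift p R ^^ (i mod R)) v = rotate_digits p R i v"
  proof (cases "i = R")
    case True
    then show ?thesis
      using v by (simp add: rotate_digits_def)
  next
    case False
    then show ?thesis
      using shift_iterate[OF p v i] i by simp
  qed
  then show ?thesis
    using rotate_digits_add[OF _ i, of p v] p by simp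
qed

lemma real_pow_minus_one_pos: "p \<ge> 2 \<Longrightarrow> R \<ge> 1 \<Longrightarrow> real p ^ R - 1 > 0"
  using one_less_power[of "real p" R] by simp

lemma phi_0: "phi D p R W 0 j = real (\<Sum>d\<in>D. W d * d j) / (real p ^ R - 1)"
  by (simp add: phi_def)

lemma weight_eq_phi_0:
  assumes "p \<ge> 2" and "R \<ge> 1"
  shows "real (\<Sum>d\<in>D. W d * d j) = (real p ^ R - 1) * phi D p R W 0 j"
  using real_pow_minus_one_pos[OF assms] by (simp add: phi_0)

lemma phi_eq_pow_mult_phi_0:
  assumes p: "p \<ge> 2" and R: "R \<ge> 1" and i: "i \<le> R" and W: "\<forall>d\<in>D. W d < p ^ R"
  shows "phi D p R W i j
    = real p ^ i * phi D p R W 0 j - real (\<Sum>d\<in>D. W d div p ^ (R - i) * d j)"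
proof -
  define N where "N = real p ^ R - 1"
  have N: "N > 0"
    using real_pow_minus_one_pos[OF p R] by (simp add: N_def)
  have each: "real ((shift p R ^^ (i mod R)) (W d))
      = real p ^ i * real (W d) - N * real (W d div p ^ (R - i))" if "d \<in> D" for d
  proof -
    have "real ((shift p R ^^ (i mod R)) (W d)) + real (p ^ R - 1) * real (W d div p ^ (R - i))
        = real p ^ i * real (W d)"
      using shift_iterate_mod_add[OF p R i, of "W d"] W that by (metis of_nat_add of_nat_mult of_nat_power)
    moreover have "real (p ^ R - 1) = N"
      using p by (simp add: N_def of_nat_diff)
    ultimately show ?thesis
      by simp
  qed
  have "real (\<Sum>d\<in>D. (shift p R ^^ (i mod R)) (W d) * d j)
      = (\<Sum>d\<in>D. real p ^ i * (real (W d) * real (d j)) - N * (real (W d div p ^ (R - i)) * real (d j)))"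
    unfolding of_nat_sum of_nat_mult
  proof (intro sum.cong refl)
    fix d assume "d \<in> D"
    then show "real ((shift p R ^^ (i mod R)) (W d)) * real (d j)
        = real p ^ i * (real (W d) * real (d j)) - N * (real (W d div p ^ (R - i)) * real (d j))"
      unfolding each[OF \<open>d \<in> D\<close>] by (simp add: algebra_simps)
  qed
  also have "\<dots> = real p ^ i * real (\<Sum>d\<in>D. W d * d j) - N * real (\<Sum>d\<in>D. W d div p ^ (R - i) * d j)"
    by (simp add: of_nat_sum sum_subtractf sum_distrib_left)
  finally have "real (\<Sum>d\<in>D. (shift p R ^^ (i mod R)) (W d) * d j) = \<dots>" .
  then show ?thesis
    using N by (simp add: phi_def phi_0 N_def[symmetric] field_simps)
qed

lemma E_set_length_pos: "U \<in> E_set D p r \<Longrightarrow> r \<ge> 1"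
proof (rule ccontr)
  assume U: "U \<in> E_set D p r" and "\<not> r \<ge> 1"
  then have "r = 0"
    by simp
  then have "\<forall>d\<in>D. U d = 0"
    using U by (simp add: E_set_def)
  moreover have "(\<Sum>d\<in>D. U d * d i) > 0" for i
    using U by (simp add: E_set_def)
  ultimately show False
    by simp
qed

lemma E_set_less: "U \<in> E_set D p r \<Longrightarrow> p > 0 \<Longrightarrow> \<forall>d\<in>D. U d < p ^ r"
  by (simp add: E_set_def Suc_le_eq le_diff_conv2)

lemma concat_less:
  fixes x y p :: nat
  assumes y: "y < p ^ r" and x: "x < p ^ r'"
  shows "p ^ r * x + y < p ^ (r + r')"
proof -
  have "p ^ r * x + y < p ^ r * x + p ^ r"
    using y by simp
  also have "\<dots> = p ^ r * (x + 1)"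
    by simp
  also have "\<dots> \<le> p ^ r * p ^ r'"
    using x by (intro mult_left_mono) simp_all
  finally show ?thesis
    by (simp add: power_add)
qed

lemma concat_div_high:
  fixes x y p :: nat
  assumes "y < p ^ r"
  shows "(p ^ r * x + y) div p ^ (r + m) = x div p ^ m"
proof -
  have "p ^ r \<noteq> 0"
    using assms by (rule gr_implies_not0)
  then have "(p ^ r * x + y) div p ^ r = x + y div p ^ r"
    by (metis add.commute div_mult_self1 mult.commute)
  then have "(p ^ r * x + y) div p ^ r = x"
    using assms by simp
  then show ?thesis
    by (simp add: power_add div_mult2_eq)
qed

lemma concat_div_low:
  fixes x y p :: nat
  assumes "p > 0" and "k \<le> r"
  shows "(p ^ r * x + y) div p ^ k = p ^ (r - k) * x + y div p ^ k"
proof -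
  have "p ^ r = p ^ (r - k) * p ^ k"
    using assms(2) by (simp add: power_add[symmetric])
  then have "(p ^ r * x + y) div p ^ k = (y + p ^ (r - k) * x * p ^ k) div p ^ k"
    by (simp add: algebra_simps)
  also have "\<dots> = p ^ (r - k) * x + y div p ^ k"
    using assms(1) by (intro div_mult_self1) simp
  finally show ?thesis .
qed

definition concat_tuple :: "nat \<Rightarrow> nat \<Rightarrow> ('a \<Rightarrow> nat) \<Rightarrow> ('a \<Rightarrow> nat) \<Rightarrow> 'a \<Rightarrow> nat" where
  "concat_tuple p r U' U = (\<lambda>d. p ^ r * U' d + U d)"

lemma phi_concat_0:
  assumes p: "p \<ge> 2" and r: "r \<ge> 1" and r': "r' \<ge> 1"
    and eq: "phi D p r U 0 = phi D p r' U' 0"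
  shows "phi D p (r + r') (concat_tuple p r U' U) 0 = phi D p r U 0"
proof
  fix j
  let ?V = "concat_tuple p r U' U" and ?c = "phi D p r U 0 j"
  have "(real p ^ (r + r') - 1) * phi D p (r + r') ?V 0 j = real (\<Sum>d\<in>D. ?V d * d j)"
    using weight_eq_phi_0[OF p, where R="r + r'" and D=D and W="?V" and j=j] r by simp
  also have "\<dots> = real p ^ r * real (\<Sum>d\<in>D. U' d * d j) + real (\<Sum>d\<in>D. U d * d j)"
    by (simp add: concat_tuple_def algebra_simps sum.distrib sum_distrib_left)
  also have "\<dots> = real p ^ r * ((real p ^ r' - 1) * ?c) + (real p ^ r - 1) * ?c"
    using weight_eq_phi_0[OF p r', where D=D and W=U' and j=j]
      weight_eq_phi_0[OF p r, where D=D and W=U and j=j] eq by simp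
  also have "\<dots> = (real p ^ (r + r') - 1) * ?c"
    by (simp add: power_add algebra_simps)
  finally show "phi D p (r + r') ?V 0 j = ?c"
    using real_pow_minus_one_pos[OF p, of "r + r'"] r by simp
qed

lemma E_set_concat:
  assumes p: "p \<ge> 2" and U: "U \<in> E_set D p r" and U': "U' \<in> E_set D p r'"
    and eq: "phi D p r U 0 = phi D p r' U' 0"
  shows "concat_tuple p r U' U \<in> E_set D p (r + r')"
proof -
  let ?V = "concat_tuple p r U' U"
  have r: "r \<ge> 1" and r': "r' \<ge> 1"
    using E_set_length_pos[OF U] E_set_length_pos[OF U'] .
  have "?V d = 0" if "d \<notin> D" for d
    using U U' that by (simp add: E_set_def concat_tuple_def)
  moreover have "?V d \<le> p ^ (r + r') - 1" if "d \<in> D" for d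
    using concat_less[of "U d" p r "U' d" r'] E_set_less[OF U] E_set_less[OF U'] p that
    by (simp add: concat_tuple_def)
  moreover have "(\<Sum>d\<in>D. ?V d * d i) mod (p ^ (r + r') - 1) = 0" for i
  proof -
    have "(p ^ r - 1) dvd (\<Sum>d\<in>D. U d * d i)"
      using U by (simp add: E_set_def dvd_eq_mod_eq_0)
    then obtain a where a: "(\<Sum>d\<in>D. U d * d i) = (p ^ r - 1) * a" ..
    have "real (\<Sum>d\<in>D. ?V d * d i) = (real p ^ (r + r') - 1) * phi D p r U 0 i"
      using weight_eq_phi_0[OF p, where R="r + r'" and D=D and W="?V" and j=i] phi_concat_0[OF p r r' eq] r by simp
    also have "phi D p r U 0 i = real a"
      using a real_pow_minus_one_pos[OF p r] p by (simp add: phi_0 of_nat_diff)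
    finally have "real (\<Sum>d\<in>D. ?V d * d i) = real ((p ^ (r + r') - 1) * a)"
      using p by (simp add: of_nat_diff)
    then show ?thesis
      by (simp only: of_nat_eq_iff) simp
  qed
  moreover have "(\<Sum>d\<in>D. ?V d * d i) > 0" for i
  proof -
    have "(\<Sum>d\<in>D. U d * d i) \<le> (\<Sum>d\<in>D. ?V d * d i)"
      by (intro sum_mono) (simp add: concat_tuple_def)
    moreover have "(\<Sum>d\<in>D. U d * d i) > 0"
      using U by (simp add: E_set_def)
    ultimately show ?thesis
      by simp
  qed
  ultimately show ?thesis
    by (simp add: E_set_def)
qed

lemma sp_tuple_concat:
  assumes p: "p \<ge> 2" and U: "\<forall>d\<in>D. U d < p ^ r"
  shows "sp_tuple D p (concat_tuple p r U' U) = sp_tuple D p U' + sp_tuple D p U"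
  unfolding sp_tuple_def concat_tuple_def
  using U digit_sum_concat[OF p] by (simp add: sum.distrib cong: sum.cong)

lemma minimal_concat:
  assumes p: "p \<ge> 2" and U: "minimal D p r U" and U': "minimal D p r' U'"
    and eq: "phi D p r U 0 = phi D p r' U' 0"
  shows "minimal D p (r + r') (concat_tuple p r U' U)"
proof -
  have UE: "U \<in> E_set D p r" and U'E: "U' \<in> E_set D p r'"
    using U U' by (simp_all add: minimal_def)
  have "sp_tuple D p (concat_tuple p r U' U) = sp_tuple D p U' + sp_tuple D p U"
    using sp_tuple_concat[OF p] E_set_less[OF UE] p by simp
  then show ?thesis
    using E_set_concat[OF p UE U'E eq] U U' by (simp add: minimal_def algebra_simps)
qed

lemma phi_concat_low:
  assumes p: "p \<ge> 2" and U: "U \<in> E_set D p r" and U': "U' \<in> E_set D p r'"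
    and eq: "phi D p r U 0 = phi D p r' U' 0" and i: "i \<le> r'"
  shows "phi D p (r + r') (concat_tuple p r U' U) i = phi D p r' U' i"
proof
  fix j
  let ?V = "concat_tuple p r U' U"
  have r: "r \<ge> 1" and r': "r' \<ge> 1"
    using E_set_length_pos[OF U] E_set_length_pos[OF U'] .
  have "(\<Sum>d\<in>D. ?V d div p ^ (r + r' - i) * d j) = (\<Sum>d\<in>D. U' d div p ^ (r' - i) * d j)"
  proof (intro sum.cong refl)
    fix d assume "d \<in> D"
    then have "U d < p ^ r"
      using E_set_less[OF U] p by simp
    then have "?V d div p ^ (r + (r' - i)) = U' d div p ^ (r' - i)"
      by (simp add: concat_tuple_def concat_div_high)
    then show "?V d div p ^ (r + r' - i) * d j = U' d div p ^ (r' - i) * d j"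
      using i by simp
  qed
  then show "phi D p (r + r') ?V i j = phi D p r' U' i j"
    using phi_eq_pow_mult_phi_0[OF p _ _ E_set_less[OF E_set_concat[OF p U U' eq]], of i j]
      phi_eq_pow_mult_phi_0[OF p r' i E_set_less[OF U'], of j] phi_concat_0[OF p r r' eq] eq i p r
    by simp
qed

lemma phi_concat_high:
  assumes p: "p \<ge> 2" and U: "U \<in> E_set D p r" and U': "U' \<in> E_set D p r'"
    and eq: "phi D p r U 0 = phi D p r' U' 0" and i: "i \<le> r"
  shows "phi D p (r + r') (concat_tuple p r U' U) (i + r') = phi D p r U i"
proof
  fix j
  let ?V = "concat_tuple p r U' U" and ?c = "phi D p r U 0 j"
    and ?high = "real (\<Sum>d\<in>D. U d div p ^ (r - i) * d j)"
  have r: "r \<ge> 1" and r': "r' \<ge> 1"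
    using E_set_length_pos[OF U] E_set_length_pos[OF U'] .
  have "(\<Sum>d\<in>D. ?V d div p ^ (r + r' - (i + r')) * d j)
      = (\<Sum>d\<in>D. p ^ i * (U' d * d j) + U d div p ^ (r - i) * d j)"
    using concat_div_low[of p "r - i" r] p i by (intro sum.cong refl) (simp add: concat_tuple_def algebra_simps)
  also have "\<dots> = p ^ i * (\<Sum>d\<in>D. U' d * d j) + (\<Sum>d\<in>D. U d div p ^ (r - i) * d j)"
    by (simp add: sum.distrib sum_distrib_left)
  finally have "real (\<Sum>d\<in>D. ?V d div p ^ (r + r' - (i + r')) * d j)
      = real p ^ i * ((real p ^ r' - 1) * ?c) + ?high"
    using weight_eq_phi_0[OF p r', where D=D and W=U' and j=j] eq by simp
  then have "phi D p (r + r') ?V (i + r') j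
      = real p ^ (i + r') * ?c - (real p ^ i * ((real p ^ r' - 1) * ?c) + ?high)"
    using phi_eq_pow_mult_phi_0[OF p _ _ E_set_less[OF E_set_concat[OF p U U' eq]], of "i + r'" j]
      phi_concat_0[OF p r r' eq] i p r by simp
  also have "\<dots> = real p ^ i * ?c - ?high"
    by (simp add: power_add algebra_simps)
  also have "\<dots> = phi D p r U i j"
    using phi_eq_pow_mult_phi_0[OF p r i E_set_less[OF U], of j] p by simp
  finally show "phi D p (r + r') ?V (i + r') j = phi D p r U i j" .
qed

text \<open>The hypotheses that \<open>D\<close> is finite and lies in no coordinate hyperplane belong to the
  setting in which \<open>\<delta>\<^sub>p(D)\<close> is studied; the argument does not use them.\<close>

theorem lemma2p12:
  fixes D :: "('n::finite \<Rightarrow> nat) set" and p r r' :: nat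
    and U U' :: "('n \<Rightarrow> nat) \<Rightarrow> nat"
  assumes "finite D"
    and "\<forall>i. \<exists>d\<in>D. d i \<noteq> 0"
    and "prime p"
    and "minimal D p r U"
    and "minimal D p r' U'"
    and "phi D p r U 0 = phi D p r' U' 0"
  shows "minimal D p (r + r') (\<lambda>d. p ^ r * U' d + U d)
    \<and> (\<forall>i. i \<le> r' \<longrightarrow> phi D p (r + r') (\<lambda>d. p ^ r * U' d + U d) i = phi D p r' U' i)
    \<and> (\<forall>i. 1 \<le> i \<and> i \<le> r - 1 \<longrightarrow>
          phi D p (r + r') (\<lambda>d. p ^ r * U' d + U d) (i + r') = phi D p r U i)"
proof -
  have p: "p \<ge> 2"
    using \<open>prime p\<close> by (rule prime_ge_2_nat)
  have U: "U \<in> E_set D p r" and U': "U' \<in> E_set D p r'"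
    using assms(4,5) by (simp_all add: minimal_def)
  show ?thesis
    using minimal_concat[OF p assms(4-6)] phi_concat_low[OF p U U' assms(6)]
      phi_concat_high[OF p U U' assms(6)]
    by (auto simp: concat_tuple_def)
qed

end
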